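(* Let $0<\beta<1$. Then the linear operator $T=\beta+2xD+(x^2-1)D^2$ on $\mathbb{R}[x]$, i.e. $T[f](x)=\beta f(x)+2xf'(x)+(x^2-1)f''(x)$, preserves the reality of zeros: whenever $f\in\mathbb{R}[x]$ has only real zeros, $T[f]$ has only real zeros.
   Context: $D$ denotes differentiation with respect to $x$. *)

theory Defs
  imports "HOL-Computational_Algebra.Polynomial"
begin

definition real_rooted :: "real poly \<Rightarrow> bool" where
  "real_rooted f \<longleftrightarrow> (\<forall>z::complex. poly (map_poly complex_of_real f) z = 0 \<longrightarrow> Im z = 0)"

definition T_op :: "real \<Rightarrow> real poly \<Rightarrow> real poly" where
  "T_op \<beta> f = smult \<beta> f + [:0, 2:] * pderiv f + [:-1, 0, 1:] * pderiv (pderiv f)"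

end

theory Submission
  imports Defs "HOL-Computational_Algebra.Fundamental_Theorem_Algebra"
begin

text \<open>
  Call a complex polynomial stable if it has no zeros in the open upper half-plane; a real
  polynomial is real-rooted iff it is stable, as its zeros come in conjugate pairs.
  If p is stable, then at every point w of the upper half-plane the logarithmic derivative
  p'/p = sum of 1/(w - z) over the zeros z has negative imaginary part, so s p' - p cannot
  vanish at w when Im s \<le> 0: the operators sD - 1 with Im s \<le> 0 preserve stability.
  At a fixed w with Im w > 0 the value of T[f] at w is \<beta> times the value at w of
  (s1 D - 1)(s2 D - 1)f, where s1, s2 are the roots of \<beta>s^2 + 2ws + w^2 - 1.
  Writing a = sqrt(1 - \<beta>), such a root satisfies ((1-a)s + w)((1+a)s + w) = 1, and a product
  of two points of the upper half-plane is never 1; hence Im s < 0 and T[f](w) \<noteq> 0.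
\<close>

lemma map_poly_of_real_add:
  "map_poly of_real (p + q)
     = (map_poly of_real p + map_poly of_real q :: 'a::{real_algebra_1, comm_ring} poly)"
  by (intro poly_eqI) (simp add: coeff_map_poly)

lemma map_poly_of_real_smult:
  "map_poly of_real (smult c p)
     = (smult (of_real c) (map_poly of_real p) :: 'a::{real_algebra_1, comm_ring} poly)"
  by (intro map_poly_smult) auto

lemma map_poly_of_real_mult:
  "map_poly of_real (p * q)
     = (map_poly of_real p * map_poly of_real q :: 'a::{real_algebra_1, comm_ring} poly)"
  by (induction p) (auto simp: map_poly_pCons map_poly_of_real_add map_poly_of_real_smult)

lemma map_poly_of_real_pderiv:
  "map_poly of_real (pderiv p)
     = (pderiv (map_poly of_real p) :: 'a::{real_algebra_1, idom} poly)"
  by (intro poly_eqI) (simp add: coeff_map_poly coeff_pderiv)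

definition stable_poly :: "complex poly \<Rightarrow> bool" where
  "stable_poly p \<longleftrightarrow> (\<forall>z. 0 < Im z \<longrightarrow> poly p z \<noteq> 0)"

lemma stable_poly_nonzero: "stable_poly p \<Longrightarrow> p \<noteq> 0"
  unfolding stable_poly_def by (metis poly_0 zero_less_one imaginary_unit.sel(2))

lemma Im_inverse_neg: "0 < Im z \<Longrightarrow> Im (inverse z) < 0"
  by (auto intro!: divide_pos_pos add_nonneg_pos)

lemma Im_inverse_nonneg: "Im z \<le> 0 \<Longrightarrow> 0 \<le> Im (inverse z)"
  by (simp add: divide_nonpos_nonneg)

lemma upper_half_plane_mult_neq_1:
  fixes u v :: complex
  assumes "0 < Im u" "0 < Im v"
  shows "u * v \<noteq> 1"
proof
  assume "u * v = 1"
  then have "v = inverse u" by (simp add: inverse_unique)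
  with Im_inverse_neg[OF assms(1)] assms(2) show False by simp
qed

lemma logderiv_linear_factor_mult:
  fixes \<zeta> w :: "'a::field"
  assumes "w \<noteq> \<zeta>" "poly h w \<noteq> 0"
  shows "poly (pderiv ([:-\<zeta>, 1:] * h)) w / poly ([:-\<zeta>, 1:] * h) w
           = inverse (w - \<zeta>) + poly (pderiv h) w / poly h w"
proof -
  have "poly (pderiv ([:-\<zeta>, 1:] * h)) w = (w - \<zeta>) * poly (pderiv h) w + poly h w"
    unfolding pderiv_mult by (simp add: pderiv_pCons algebra_simps)
  with assms show ?thesis by (simp add: field_simps)
qed

lemma stable_poly_Im_logderiv_neg:
  assumes "stable_poly p" "0 < degree p" "0 < Im w"
  shows "Im (poly (pderiv p) w / poly p w) < 0"
  using assms
proof (induction "degree p" arbitrary: p rule: less_induct)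
  case less
  obtain \<zeta> where "poly p \<zeta> = 0"
    using fundamental_theorem_of_algebra_alt[of p] less.prems(2) by fastforce
  then obtain h where p: "p = [:-\<zeta>, 1:] * h"
    using poly_eq_0_iff_dvd by blast
  have "Im \<zeta> \<le> 0"
    using \<open>poly p \<zeta> = 0\<close> less.prems(1) unfolding stable_poly_def by force
  with less.prems(3) have "w \<noteq> \<zeta>" by auto
  have "h \<noteq> 0" using p stable_poly_nonzero[OF less.prems(1)] by auto
  then have "degree p = degree [:-\<zeta>, 1:] + degree h"
    unfolding p by (intro degree_mult_eq) auto
  then have deg: "degree p = degree h + 1" by simp
  have "stable_poly h" using less.prems(1) unfolding stable_poly_def p by auto
  have "Im (poly (pderiv h) w / poly h w) \<le> 0"
  proof (cases "degree h = 0")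
    case True
    then show ?thesis by (simp add: pderiv_eq_0_iff[THEN iffD2])
  next
    case False
    then show ?thesis using less.hyps[OF _ \<open>stable_poly h\<close>] deg less.prems(3) by fastforce
  qed
  moreover have "poly h w \<noteq> 0"
    using \<open>stable_poly h\<close> less.prems(3) unfolding stable_poly_def by blast
  ultimately have "Im (inverse (w - \<zeta>) + poly (pderiv h) w / poly h w) < 0"
    using Im_inverse_neg[of "w - \<zeta>"] less.prems(3) \<open>Im \<zeta> \<le> 0\<close> by simp
  then show ?case
    unfolding p logderiv_linear_factor_mult[OF \<open>w \<noteq> \<zeta>\<close> \<open>poly h w \<noteq> 0\<close>] .
qed

lemma stable_poly_smult_pderiv_diff:
  assumes "stable_poly p" "Im s \<le> 0"
  shows "stable_poly (smult s (pderiv p) - p)"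
  unfolding stable_poly_def
proof (intro allI impI)
  fix w assume "0 < Im w"
  then have "poly p w \<noteq> 0" using assms(1) unfolding stable_poly_def by blast
  show "poly (smult s (pderiv p) - p) w \<noteq> 0"
  proof
    assume root: "poly (smult s (pderiv p) - p) w = 0"
    show False
    proof (cases "degree p = 0")
      case True
      then show False using root \<open>poly p w \<noteq> 0\<close> by (simp add: pderiv_eq_0_iff[THEN iffD2])
    next
      case False
      from root \<open>poly p w \<noteq> 0\<close> have "poly (pderiv p) w / poly p w = inverse s"
        by (cases "s = 0") (auto simp: field_simps)
      then show False
        using stable_poly_Im_logderiv_neg[OF assms(1) _ \<open>0 < Im w\<close>] False
          Im_inverse_nonneg[OF assms(2)] by simp
    qed
  qed
qed

lemma quadratic_vieta:
  fixes a b c :: complex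
  assumes "a \<noteq> 0"
  shows "\<exists>s1 s2. s1 + s2 = - b / a \<and> s1 * s2 = c / a"
proof -
  obtain s1 where "poly [:c, b, a:] s1 = 0"
    using fundamental_theorem_of_algebra_alt[of "[:c, b, a:]"] assms by auto
  then have "c = - (a * s1^2 + b * s1)"
    by (simp add: eq_neg_iff_add_eq_0 algebra_simps power2_eq_square)
  with assms have "s1 * (- b / a - s1) = c / a"
    by (simp add: field_simps power2_eq_square)
  then show ?thesis by (intro exI[of _ s1] exI[of _ "- b / a - s1"]) simp
qed

lemma Im_quadratic_root_neg:
  fixes w s :: complex and \<beta> :: real
  assumes "0 < Im w" "0 \<le> \<beta>" "\<beta> \<le> 1"
    and root: "\<beta> * s^2 + 2 * w * s + w^2 = 1"
  shows "Im s < 0"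
proof (rule ccontr)
  assume "\<not> Im s < 0"
  define a where "a = sqrt (1 - \<beta>)"
  have "0 \<le> a" "a \<le> 1" "a^2 = 1 - \<beta>"
    using assms(2,3) unfolding a_def by (auto simp: real_sqrt_le_1_iff)
  have a2: "(complex_of_real a)^2 = 1 - \<beta>"
    using arg_cong[OF \<open>a^2 = 1 - \<beta>\<close>, of complex_of_real] by simp
  have "((1 - a) * s + w) * ((1 + a) * s + w) = (s + w)^2 - (complex_of_real a)^2 * s^2"
    by (simp add: algebra_simps power2_eq_square)
  also have "\<dots> = \<beta> * s^2 + 2 * w * s + w^2"
    unfolding a2 by (simp add: algebra_simps power2_eq_square)
  also have "\<dots> = 1" by (fact root)
  finally have "((1 - a) * s + w) * ((1 + a) * s + w) = 1" .
  moreover have "0 < Im ((1 - a) * s + w)" "0 < Im ((1 + a) * s + w)"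
    using \<open>\<not> Im s < 0\<close> \<open>0 \<le> a\<close> \<open>a \<le> 1\<close> assms(1) by (simp_all add: add_nonneg_pos)
  ultimately show False using upper_half_plane_mult_neq_1 by blast
qed

lemma real_rooted_iff_stable_poly: "real_rooted f \<longleftrightarrow> stable_poly (map_poly of_real f)"
proof
  assume "stable_poly (map_poly of_real f)"
  show "real_rooted f"
    unfolding real_rooted_def
  proof (intro allI impI)
    fix z assume root: "poly (map_poly complex_of_real f) z = 0"
    then have "poly (map_poly complex_of_real f) (cnj z) = 0"
      by (subst real_poly_cnj_root_iff) (auto simp: coeff_map_poly)
    with root \<open>stable_poly (map_poly of_real f)\<close> show "Im z = 0"
      unfolding stable_poly_def by (cases "Im z" "0::real" rule: linorder_cases) auto
  qed
qed (auto simp: real_rooted_def stable_poly_def)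

lemma poly_T_op:
  fixes w :: complex
  shows "poly (map_poly of_real (T_op \<beta> f)) w
     = of_real \<beta> * poly (map_poly of_real f) w + 2 * w * poly (pderiv (map_poly of_real f)) w
       + (w^2 - 1) * poly (pderiv (pderiv (map_poly of_real f))) w"
  unfolding T_op_def map_poly_of_real_add map_poly_of_real_smult map_poly_of_real_mult
    map_poly_of_real_pderiv
  by (simp add: map_poly_pCons power2_eq_square algebra_simps)

lemma stable_poly_T_op:
  assumes "0 < \<beta>" "\<beta> \<le> 1" "stable_poly (map_poly of_real f)"
  shows "stable_poly (map_poly of_real (T_op \<beta> f))"
  unfolding stable_poly_def
proof (intro allI impI)
  fix w :: complex assume "0 < Im w"
  define F where "F = map_poly complex_of_real f"
  obtain s1 s2 where sum: "s1 + s2 = - (2 * w) / \<beta>" and prod: "s1 * s2 = (w^2 - 1) / \<beta>"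
    using quadratic_vieta[of "of_real \<beta>" "2 * w" "w^2 - 1"] assms(1) by auto
  have factor: "\<beta> * s^2 + 2 * w * s + w^2 - 1 = \<beta> * (s - s1) * (s - s2)" for s :: complex
  proof -
    have "\<beta> * (s - s1) * (s - s2) = \<beta> * (s^2 - (s1 + s2) * s + s1 * s2)"
      by (simp add: algebra_simps power2_eq_square)
    also have "\<dots> = \<beta> * s^2 + 2 * w * s + w^2 - 1"
      unfolding sum prod using assms(1) by (simp add: field_simps)
    finally show ?thesis ..
  qed
  have "Im s1 \<le> 0" "Im s2 \<le> 0"
    using Im_quadratic_root_neg[OF \<open>0 < Im w\<close>, where \<beta> = \<beta>] factor[of s1] factor[of s2]
      assms(1,2)
    by (fastforce simp: diff_eq_eq)+
  define g where "g = smult s2 (pderiv F) - F"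
  define h where "h = smult s1 (pderiv g) - g"
  have "stable_poly h"
    unfolding h_def g_def F_def
    by (intro stable_poly_smult_pderiv_diff assms(3) \<open>Im s1 \<le> 0\<close> \<open>Im s2 \<le> 0\<close>)
  have "poly h w
          = s1 * s2 * poly (pderiv (pderiv F)) w - (s1 + s2) * poly (pderiv F) w + poly F w"
    by (simp add: h_def g_def pderiv_diff pderiv_smult algebra_simps)
  then have "poly (map_poly of_real (T_op \<beta> f)) w = \<beta> * poly h w"
    unfolding poly_T_op F_def[symmetric] sum prod using assms(1) by (simp add: field_simps)
  with \<open>stable_poly h\<close> \<open>0 < Im w\<close> assms(1)
  show "poly (map_poly of_real (T_op \<beta> f)) w \<noteq> 0"
    unfolding stable_poly_def by simp
qed

theorem proposition4p8:
  fixes \<beta> :: real and f :: "real poly"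
  assumes "0 < \<beta>" and "\<beta> < 1"
    and "real_rooted f"
  shows "real_rooted (T_op \<beta> f)"
  using stable_poly_T_op[of \<beta> f] assms by (simp add: real_rooted_iff_stable_poly)

end
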